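(* Let $d\ge3$, $m=d$ and $p_i=1/(d+1)$ for all $i=0,\dots,d$. Then $$\inf\Delta\mu=\underline{\alpha}=\frac{\log(d+1)-\log\zeta}{\log d},\qquad \zeta=\frac{1+\sqrt5}{2},$$ and $\alpha^*=\overline{\alpha}=\frac{\log(d+1)}{\log d}$.
   Context: Given integers $d\ge3$, $m\ge d$ and a positive probability vector $\mathbf p=(p_0,\dots,p_m)$, $\mu$ is the unique compactly supported Borel probability measure with $\mu(A)=\sum_{i=0}^m p_i\,\mu(dA-i)$ for all Borel $A$. Put $\delta=-1/\log d$, $\mathcal A=\{0,\dots,m\}$, $\mathcal A^*$ the set of finite words over $\mathcal A$, $|\sigma|$ the length and $\sigma_j$ the $j$-th letter of $\sigma$. Let $a=1+\lfloor (m-d)/(d-1)\rfloor$, set $p_j=0$ for $j\notin\mathcal A$, and let $M_i$ ($i\in\mathcal A$) be the $(2a+1)\times(2a+1)$ matrix indexed by $\{-a,\dots,a\}^2$ with $M_i(k,l)=p_{k+i-ld}$; $M(\sigma)=M_{\sigma_k}\cdots M_{\sigma_1}$ for $\sigma$ of length $k$; $\rho$ is spectral radius, $\tilde\rho(\mathcal M)=\limsup_{k}\left(\sup\{\rho(A_1\cdots A_k):A_i\in\mathcal M\}\right)^{1/k}$. Set $\underline{\alpha}=\delta\log\tilde\rho(M_0,\dots,M_m)$, $\alpha^*=\delta\log\inf\{\rho(M(\sigma))^{1/|\sigma|}:\sigma\in\mathcal A^*,\ \sigma_1\notin\{0,m\}\}$, $\overline{\alpha}=\delta\log p_0$. $\Delta\mu$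 is the set of values $\dim\mu(x)=\lim_{r\to0^+}\log\mu(B(x,r))/\log r$ over $x\in\operatorname{supp}\mu$ where this limit exists. *)

theory Defs
  imports "HOL-Probability.Probability" "Jordan_Normal_Form.Spectral_Radius"
begin

definition is_ssm :: "nat \<Rightarrow> nat \<Rightarrow> (nat \<Rightarrow> real) \<Rightarrow> real measure \<Rightarrow> bool" where
  "is_ssm d m p \<mu> \<longleftrightarrow> prob_space \<mu> \<and> sets \<mu> = sets borel \<and>
     (\<exists>K. compact K \<and> emeasure \<mu> (UNIV - K) = 0) \<and>
     (\<forall>A \<in> sets borel. measure \<mu> A =
        (\<Sum>i\<le>m. p i * measure \<mu> ((\<lambda>x. real d * x - real i) ` A)))"

definition msupp :: "real measure \<Rightarrow> real set" where
  "msupp \<mu> = {x. \<forall>r>0. measure \<mu> (ball x r) > 0}"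

definition local_dims :: "real measure \<Rightarrow> real set" where
  "local_dims \<mu> = {L. \<exists>x \<in> msupp \<mu>.
      ((\<lambda>r. ln (measure \<mu> (ball x r)) / ln r) \<longlongrightarrow> L) (at_right 0)}"

definition pext :: "nat \<Rightarrow> (nat \<Rightarrow> real) \<Rightarrow> int \<Rightarrow> real" where
  "pext m p j = (if 0 \<le> j \<and> j \<le> int m then p (nat j) else 0)"

definition aa :: "nat \<Rightarrow> nat \<Rightarrow> int" where
  "aa d m = 1 + \<lfloor>(real m - real d) / (real d - 1)\<rfloor>"

text \<open>M_i, indexed by {-a..a}^2; row/column index r corresponds to r - a.\<close>
definition Mi :: "nat \<Rightarrow> nat \<Rightarrow> (nat \<Rightarrow> real) \<Rightarrow> nat \<Rightarrow> complex mat" where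
  "Mi d m p i = (let a = aa d m in
     Matrix.mat (nat (2*a+1)) (nat (2*a+1))
       (\<lambda>(r, s). complex_of_real (pext m p ((int r - a) + int i - (int s - a) * int d))))"

text \<open>M(sigma) = M_{sigma_k} ... M_{sigma_1}, sigma = [sigma_1,...,sigma_k].\<close>
fun Mw :: "nat \<Rightarrow> nat \<Rightarrow> (nat \<Rightarrow> real) \<Rightarrow> nat list \<Rightarrow> complex mat" where
  "Mw d m p [] = 1\<^sub>m (nat (2 * aa d m + 1))"
| "Mw d m p (i # \<sigma>) = Mw d m p \<sigma> * Mi d m p i"

definition rho_tilde :: "nat \<Rightarrow> nat \<Rightarrow> (nat \<Rightarrow> real) \<Rightarrow> real" where
  "rho_tilde d m p = real_of_ereal (limsup (\<lambda>k. ereal (root k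
     (Sup {spectral_radius (Mw d m p \<sigma>) | \<sigma>. length \<sigma> = k \<and> set \<sigma> \<subseteq> {0..m}}))))"

definition alpha_low :: "nat \<Rightarrow> nat \<Rightarrow> (nat \<Rightarrow> real) \<Rightarrow> real" where
  "alpha_low d m p = - ln (rho_tilde d m p) / ln (real d)"

definition alpha_star :: "nat \<Rightarrow> nat \<Rightarrow> (nat \<Rightarrow> real) \<Rightarrow> real" where
  "alpha_star d m p = - ln (Inf {root (length \<sigma>) (spectral_radius (Mw d m p \<sigma>)) | \<sigma>.
       \<sigma> \<noteq> [] \<and> set \<sigma> \<subseteq> {0..m} \<and> hd \<sigma> \<notin> {0, m}}) / ln (real d)"

definition alpha_up :: "nat \<Rightarrow> (nat \<Rightarrow> real) \<Rightarrow> real" where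
  "alpha_up d p = - ln (p 0) / ln (real d)"

end

theory Submission
  imports Defs "HOL-Number_Theory.Fib"
begin

(*
  For m = d the matrices M_i are 3 x 3, namely q E_i with q = 1/(d+1) and E_i a 0/1 matrix.
  The columns of a product E(sigma) obey a Fibonacci invariant, so
  rho(M(sigma)) <= 3 (phi q)^|sigma|, while the word (0 d)^n attains (phi q)^(2n) through the
  eigenvector (1, phi, 1/phi) of E_d E_0; the central entry of E(sigma) is at least 1, whence
  rho(M(sigma)) >= q^|sigma|, with equality for sigma = [1].
  On the measure side mu(A) = q^n * sum over digit words w of length n of mu(d^n A - v(w)),
  and the number of words of a given value v(w) obeys the same Fibonacci bounds. Hence every
  ball of radius d^-n has mass at most 7 (phi q)^n, whereas around x0 = d/(d^2 - 1), whose
  base-d expansion is 0.1010..., two adjacent values are represented F_(n+2) times in total,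
  so the ball has mass at least (phi q)^n. The local dimension is therefore minimal at x0,
  where it equals -log(phi q)/log d.
*)

section \<open>The golden ratio and Fibonacci numbers\<close>

definition golden_ratio :: real where
  "golden_ratio = (1 + sqrt 5) / 2"

lemma golden_ratio_squared: "golden_ratio\<^sup>2 = golden_ratio + 1"
  unfolding golden_ratio_def by (simp add: power2_eq_square field_simps)

lemma golden_ratio_gt_1: "1 < golden_ratio"
  and golden_ratio_less_2: "golden_ratio < 2"
proof -
  have "1 < sqrt 5" "sqrt 5 < 3"
    by (simp_all add: real_less_rsqrt real_sqrt_less_iff[of 5 "3\<^sup>2", simplified])
  then show "1 < golden_ratio" "golden_ratio < 2"
    unfolding golden_ratio_def by simp_all
qed

lemma fib_Suc_le_golden_ratio_power: "real (fib (Suc n)) \<le> golden_ratio ^ n"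
proof (induction n rule: fib.induct)
  case (3 n)
  have "real (fib (Suc (Suc (Suc n)))) = real (fib (Suc (Suc n))) + real (fib (Suc n))"
    by simp
  also have "\<dots> \<le> golden_ratio ^ Suc n + golden_ratio ^ n"
    using "3.IH" by (intro add_mono)
  also have "\<dots> = golden_ratio ^ n * (golden_ratio + 1)"
    by (simp add: algebra_simps)
  also have "\<dots> = golden_ratio ^ Suc (Suc n)"
    by (simp add: golden_ratio_squared[symmetric] power2_eq_square)
  finally show ?case .
qed (use golden_ratio_gt_1 in auto)

lemma golden_ratio_power_le_fib: "golden_ratio ^ n \<le> real (fib (Suc (Suc n)))"
proof (induction n rule: fib.induct)
  case (3 n)
  have "golden_ratio ^ Suc (Suc n) = golden_ratio ^ n * (golden_ratio + 1)"
    by (simp add: golden_ratio_squared[symmetric] power2_eq_square)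
  also have "\<dots> = golden_ratio ^ Suc n + golden_ratio ^ n"
    by (simp add: algebra_simps)
  also have "\<dots> \<le> real (fib (Suc (Suc (Suc n)))) + real (fib (Suc (Suc n)))"
    using "3.IH" by (intro add_mono)
  finally show ?case by simp
qed (use golden_ratio_less_2 in auto)

section \<open>Spectral radius of nonnegative matrices\<close>

lemma index_mult_mat_sum:
  assumes "A \<in> carrier_mat nr n" "B \<in> carrier_mat n nc" "r < nr" "s < nc"
  shows "(A * B) $$ (r, s) = (\<Sum>l<n. A $$ (r, l) * B $$ (l, s))"
  using assms by (simp add: scalar_prod_def atLeast0LessThan)

lemma mult_mat_nonneg:
  fixes A B :: "'a :: linordered_semidom mat"
  assumes A: "A \<in> carrier_mat n n" and B: "B \<in> carrier_mat n n"
    and "\<And>r s. r < n \<Longrightarrow> s < n \<Longrightarrow> 0 \<le> A $$ (r, s)"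
    and "\<And>r s. r < n \<Longrightarrow> s < n \<Longrightarrow> 0 \<le> B $$ (r, s)"
    and "r < n" "s < n"
  shows "0 \<le> (A * B) $$ (r, s)"
  unfolding index_mult_mat_sum[OF A B \<open>r < n\<close> \<open>s < n\<close>]
  by (intro sum_nonneg mult_nonneg_nonneg) (simp_all add: assms)

lemma pow_mat_nonneg:
  fixes B :: "'a :: linordered_semidom mat"
  assumes B: "B \<in> carrier_mat n n"
    and nonneg: "\<And>r s. r < n \<Longrightarrow> s < n \<Longrightarrow> 0 \<le> B $$ (r, s)"
  shows "r < n \<Longrightarrow> s < n \<Longrightarrow> 0 \<le> (B ^\<^sub>m k) $$ (r, s)"
proof (induction k arbitrary: r s)
  case (Suc k)
  then show ?case
    using B nonneg by (simp only: pow_mat.simps) (rule mult_mat_nonneg[of _ n]; simp)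
qed (use B in simp)

lemma pow_mat_diag_ge:
  fixes B :: "'a :: linordered_semidom mat"
  assumes B: "B \<in> carrier_mat n n" and i: "i < n"
    and nonneg: "\<And>r s. r < n \<Longrightarrow> s < n \<Longrightarrow> 0 \<le> B $$ (r, s)"
  shows "B $$ (i, i) ^ k \<le> (B ^\<^sub>m k) $$ (i, i)"
proof (induction k)
  case (Suc k)
  have Bk: "B ^\<^sub>m k \<in> carrier_mat n n" using B by simp
  have "B $$ (i, i) ^ Suc k \<le> (B ^\<^sub>m k) $$ (i, i) * B $$ (i, i)"
    using Suc nonneg[OF i i] by (simp add: mult_left_mono mult.commute)
  also have "\<dots> \<le> (\<Sum>l<n. (B ^\<^sub>m k) $$ (i, l) * B $$ (l, i))"
    using i nonneg pow_mat_nonneg[OF B nonneg]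
    by (intro member_le_sum[where f = "\<lambda>l. (B ^\<^sub>m k) $$ (i, l) * B $$ (l, i)"]) auto
  also have "\<dots> = (B ^\<^sub>m Suc k) $$ (i, i)"
    using index_mult_mat_sum[OF Bk B i i] by simp
  finally show ?case .
qed (use B i in simp)

lemma eigenvalue_norm_le_spectral_radius:
  assumes A: "A \<in> carrier_mat n n" and k: "eigenvalue A k"
  shows "cmod k \<le> spectral_radius A"
  using eigenvalue_imp_nonzero_dim[OF A k] k
  by (intro spectral_radius_mem_max(2)[OF A]) (auto simp: spectrum_def)

lemma spectral_radius_attained:
  assumes A: "A \<in> carrier_mat n n" and n: "0 < n"
  obtains k v where "v \<in> carrier_vec n" "v \<noteq> 0\<^sub>v n" "A *\<^sub>v v = k \<cdot>\<^sub>v v"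
    "spectral_radius A = cmod k"
  using spectral_radius_mem_max(1)[OF A n] A
  unfolding spectrum_def eigenvalue_def eigenvector_def by auto

lemma spectral_radius_nonneg:
  assumes "A \<in> carrier_mat n n" "0 < n"
  shows "0 \<le> spectral_radius A"
  using spectral_radius_mem_max(1)[OF assms] by force

lemma spectral_radius_le_row_sum:
  assumes A: "A \<in> carrier_mat n n" and n: "0 < n"
    and rows: "\<And>r. r < n \<Longrightarrow> (\<Sum>s<n. cmod (A $$ (r, s))) \<le> c"
  shows "spectral_radius A \<le> c"
proof -
  obtain k v where v: "v \<in> carrier_vec n" "v \<noteq> 0\<^sub>v n" "A *\<^sub>v v = k \<cdot>\<^sub>v v"
    and k: "spectral_radius A = cmod k"
    using spectral_radius_attained[OF A n] .
  obtain r where r: "r < n" and r_max: "\<And>s. s < n \<Longrightarrow> cmod (v $ s) \<le> cmod (v $ r)"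
  proof -
    let ?m = "Max ((\<lambda>s. cmod (v $ s)) ` {..<n})"
    have "?m \<in> (\<lambda>s. cmod (v $ s)) ` {..<n}"
      using n by (intro Max_in) auto
    then obtain r where "r < n" "?m = cmod (v $ r)"
      by auto
    then show thesis
      using that[of r] Max_ge[of "(\<lambda>s. cmod (v $ s)) ` {..<n}"] by auto
  qed
  have "v $ r \<noteq> 0"
  proof
    assume "v $ r = 0"
    then have "v = 0\<^sub>v n"
      using v(1) r_max by (intro eq_vecI) fastforce+
    with v(2) show False ..
  qed
  have "cmod k * cmod (v $ r) = cmod ((A *\<^sub>v v) $ r)"
    using v r by (simp add: norm_mult)
  also have "\<dots> = cmod (\<Sum>s<n. A $$ (r, s) * v $ s)"
    using A v(1) r by (simp add: scalar_prod_def atLeast0LessThan)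
  also have "\<dots> \<le> (\<Sum>s<n. cmod (A $$ (r, s)) * cmod (v $ r))"
    using r_max by (intro order.trans[OF norm_sum] sum_mono)
      (simp add: norm_mult mult_left_mono)
  also have "\<dots> \<le> c * cmod (v $ r)"
    using rows[OF r] by (simp add: sum_distrib_right[symmetric] mult_right_mono)
  finally show ?thesis
    using k \<open>v $ r \<noteq> 0\<close> by simp
qed

lemma spectral_radius_smult_le:
  assumes A: "A \<in> carrier_mat n n" and n: "0 < n" and c: "c \<noteq> 0"
  shows "spectral_radius (c \<cdot>\<^sub>m A) \<le> cmod c * spectral_radius A"
proof -
  obtain k v where v: "v \<in> carrier_vec n" "v \<noteq> 0\<^sub>v n" "(c \<cdot>\<^sub>m A) *\<^sub>v v = k \<cdot>\<^sub>v v"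
    and k: "spectral_radius (c \<cdot>\<^sub>m A) = cmod k"
    using spectral_radius_attained[OF smult_carrier_mat[OF A] n] .
  have "A *\<^sub>v v = (k / c) \<cdot>\<^sub>v v"
  proof (rule eq_vecI)
    fix r assume "r < dim_vec ((k / c) \<cdot>\<^sub>v v)"
    then have r: "r < n" using v(1) by simp
    have "c * (A *\<^sub>v v) $ r = ((c \<cdot>\<^sub>m A) *\<^sub>v v) $ r"
      using A v(1) r by (simp add: scalar_prod_def sum_distrib_left mult.assoc)
    then show "(A *\<^sub>v v) $ r = ((k / c) \<cdot>\<^sub>v v) $ r"
      using v(3) r v(1) c by (simp add: field_simps)
  qed (use A v(1) in simp)
  then have "eigenvalue A (k / c)"
    using A v unfolding eigenvalue_def eigenvector_def by auto
  from eigenvalue_norm_le_spectral_radius[OF A this]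
  show ?thesis
    using k c by (simp add: norm_divide field_simps)
qed

lemma smult_smult_mat: "a \<cdot>\<^sub>m (b \<cdot>\<^sub>m A) = (a * b :: 'a :: semigroup_mult) \<cdot>\<^sub>m A"
  by (rule eq_matI) (auto simp: mult.assoc)

lemma spectral_radius_smult:
  assumes A: "A \<in> carrier_mat n n" and n: "0 < n" and c: "c \<noteq> 0"
  shows "spectral_radius (c \<cdot>\<^sub>m A) = cmod c * spectral_radius A"
proof (rule antisym)
  have "inverse c \<cdot>\<^sub>m (c \<cdot>\<^sub>m A) = A"
    using c by (intro eq_matI) auto
  then have "spectral_radius A = spectral_radius (inverse c \<cdot>\<^sub>m (c \<cdot>\<^sub>m A))"
    by simp
  also have "\<dots> \<le> cmod (inverse c) * spectral_radius (c \<cdot>\<^sub>m A)"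
    using A n c by (intro spectral_radius_smult_le) auto
  also have "\<dots> = spectral_radius (c \<cdot>\<^sub>m A) / cmod c"
    by (simp add: norm_inverse divide_inverse mult.commute)
  finally show "cmod c * spectral_radius A \<le> spectral_radius (c \<cdot>\<^sub>m A)"
    using c by (simp add: pos_le_divide_eq mult.commute)
qed (rule spectral_radius_smult_le[OF assms])

lemma map_mat_of_real_smult:
  "map_mat complex_of_real (t \<cdot>\<^sub>m B) = complex_of_real t \<cdot>\<^sub>m map_mat complex_of_real B"
  by (rule eq_matI) auto

lemma spectral_radius_less_1_pow_bounded:
  fixes C :: "real mat"
  assumes C: "C \<in> carrier_mat n n" and less_1: "spectral_radius (map_mat complex_of_real C) < 1"
  obtains K where "\<And>k i j. i < n \<Longrightarrow> j < n \<Longrightarrow> \<bar>(C ^\<^sub>m k) $$ (i, j)\<bar> \<le> K"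
proof -
  obtain K where K: "\<And>k. norm_bound (map_mat complex_of_real C ^\<^sub>m k) K"
    using spectral_radius_jnf_norm_bound_less_1_upper_triangular[OF _ less_1] C by auto
  have "\<bar>(C ^\<^sub>m k) $$ (i, j)\<bar> \<le> K" if "i < n" "j < n" for k i j
  proof -
    have "map_mat complex_of_real C ^\<^sub>m k = map_mat complex_of_real (C ^\<^sub>m k)"
      using of_real_hom.mat_hom_pow[OF C] by (rule sym)
    then have "norm (complex_of_real ((C ^\<^sub>m k) $$ (i, j))) \<le> K"
      using K[of k] C that unfolding norm_bound_def by auto
    then show ?thesis
      by simp
  qed
  then show ?thesis
    using that by blast
qed

(* If rho(B) < B_ii, the powers of B / rho' with rho(B) < rho' < B_ii stay bounded,
   yet their (i, i) entries grow geometrically. *)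
lemma nonneg_mat_diag_le_spectral_radius:
  fixes B :: "real mat"
  assumes B: "B \<in> carrier_mat n n" and i: "i < n"
    and nonneg: "\<And>r s. r < n \<Longrightarrow> s < n \<Longrightarrow> 0 \<le> B $$ (r, s)"
  shows "B $$ (i, i) \<le> spectral_radius (map_mat complex_of_real B)"
proof (rule ccontr)
  let ?A = "map_mat complex_of_real B"
  have A: "?A \<in> carrier_mat n n" using B by simp
  have n: "0 < n" using i by simp
  assume "\<not> ?thesis"
  then obtain \<rho> where \<rho>: "spectral_radius ?A < \<rho>" "\<rho> < B $$ (i, i)"
    using dense[of "spectral_radius ?A" "B $$ (i, i)"] by (auto simp: not_le)
  have "0 < \<rho>"
    using \<rho>(1) spectral_radius_nonneg[OF A n] by linarith
  define C where "C = (1 / \<rho>) \<cdot>\<^sub>m B"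
  have C: "C \<in> carrier_mat n n" using B by (simp add: C_def)
  have C_nonneg: "0 \<le> C $$ (r, s)" if "r < n" "s < n" for r s
    using that B nonneg[OF that] \<open>0 < \<rho>\<close> by (simp add: C_def)
  have "spectral_radius (map_mat complex_of_real C) = spectral_radius (complex_of_real (1 / \<rho>) \<cdot>\<^sub>m ?A)"
    unfolding C_def map_mat_of_real_smult ..
  also have "\<dots> = cmod (complex_of_real (1 / \<rho>)) * spectral_radius ?A"
    by (rule spectral_radius_smult[OF A n]) (use \<open>0 < \<rho>\<close> in simp)
  also have "\<dots> = spectral_radius ?A / \<rho>"
    using \<open>0 < \<rho>\<close> by (simp only: norm_of_real) simp
  also have "\<dots> < 1"
    using \<rho>(1) \<open>0 < \<rho>\<close> by simp
  finally obtain K where K: "\<And>k. \<bar>(C ^\<^sub>m k) $$ (i, i)\<bar> \<le> K"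
    using spectral_radius_less_1_pow_bounded[OF C] i by metis
  have "1 < C $$ (i, i)"
    using \<rho> \<open>0 < \<rho>\<close> B i by (simp add: C_def field_simps)
  then obtain k where "K < C $$ (i, i) ^ k"
    using real_arch_pow by blast
  also have "\<dots> \<le> (C ^\<^sub>m k) $$ (i, i)"
    by (rule pow_mat_diag_ge[OF C i C_nonneg])
  also have "\<dots> \<le> K"
    using K[of k] by simp
  finally show False by simp
qed

lemma limsup_root_eq:
  fixes u :: "nat \<Rightarrow> real" and r :: "nat \<Rightarrow> nat"
  assumes c: "0 < c" and C: "0 < C"
    and upper: "\<And>k. u k \<le> C * c ^ k"
    and r: "strict_mono r" and lower: "\<And>n. c ^ r n \<le> u (r n)"
  shows "limsup (\<lambda>k. ereal (root k (u k))) = ereal c"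
proof (rule antisym)
  have "limsup (\<lambda>k. ereal (root k (u k))) \<le> limsup (\<lambda>k. ereal (root k C * c))"
  proof (intro Limsup_mono eventually_sequentiallyI)
    fix k :: nat assume "1 \<le> k"
    then have "root k (u k) \<le> root k (C * c ^ k)"
      using upper by simp
    also have "\<dots> = root k C * c"
      using \<open>1 \<le> k\<close> c by (simp add: real_root_mult real_root_power_cancel)
    finally show "ereal (root k (u k)) \<le> ereal (root k C * c)"
      by simp
  qed
  also have "\<dots> = ereal c"
    using tendsto_mult[OF LIMSEQ_root_const[OF C] tendsto_const[of c]]
    by (intro lim_imp_Limsup) (simp_all add: lim_ereal)
  finally show "limsup (\<lambda>k. ereal (root k (u k))) \<le> ereal c" .
next
  have "ereal c \<le> limsup ((\<lambda>k. ereal (root k (u k))) \<circ> r)"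
  proof (intro le_Limsup eventually_sequentiallyI)
    fix n :: nat assume "1 \<le> n"
    then have "0 < r n"
      using seq_suble[OF r, of n] by linarith
    then have "c = root (r n) (c ^ r n)"
      using c by (simp add: real_root_power_cancel)
    also have "\<dots> \<le> root (r n) (u (r n))"
      using lower \<open>0 < r n\<close> by simp
    finally show "ereal c \<le> ((\<lambda>k. ereal (root k (u k))) \<circ> r) n"
      by simp
  qed simp
  also have "\<dots> \<le> limsup (\<lambda>k. ereal (root k (u k)))"
    by (rule limsup_subseq_mono[OF r])
  finally show "ereal c \<le> limsup (\<lambda>k. ereal (root k (u k)))" .
qed

lemma tendsto_const_divide_ln_at_right_0: "((\<lambda>r. K / ln r) \<longlongrightarrow> 0) (at_right (0 :: real))"
proof (rule tendsto_divide_0[OF tendsto_const])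
  show "filterlim ln at_infinity (at_right (0 :: real))"
    using ln_at_0 filterlim_at_bot_imp_at_infinity by blast
qed

lemma eventually_at_right_0_less_1: "\<forall>\<^sub>F r in at_right (0 :: real). 0 < r \<and> r < 1"
  by (rule eventually_at_rightI[of 0 1]) auto

lemma tendsto_divide_ln_at_right_0:
  fixes f :: "real \<Rightarrow> real"
  assumes bound: "\<forall>\<^sub>F r in at_right 0. \<bar>f r - L * ln r\<bar> \<le> K"
  shows "((\<lambda>r. f r / ln r) \<longlongrightarrow> L) (at_right 0)"
proof (rule LIM_zero_cancel, rule Lim_null_comparison)
  show "\<forall>\<^sub>F r in at_right 0. norm (f r / ln r - L) \<le> K / - ln r"
    using bound eventually_at_right_0_less_1
  proof eventually_elim
    case (elim r)
    then have "ln r < 0"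
      by simp
    then have "norm (f r / ln r - L) = \<bar>f r - L * ln r\<bar> / - ln r"
      by (simp add: field_simps abs_divide)
    also have "\<dots> \<le> K / - ln r"
      using elim \<open>ln r < 0\<close> by (intro divide_right_mono) auto
    finally show ?case .
  qed
  show "((\<lambda>r. K / - ln r) \<longlongrightarrow> 0) (at_right 0)"
    using tendsto_const_divide_ln_at_right_0[of "- K"] by simp
qed

lemma tendsto_divide_ln_at_right_0_ge:
  fixes f :: "real \<Rightarrow> real"
  assumes bound: "\<forall>\<^sub>F r in at_right 0. f r \<le> L * ln r + K"
    and lim: "((\<lambda>r. f r / ln r) \<longlongrightarrow> L') (at_right 0)"
  shows "L \<le> L'"
proof (rule tendsto_le[OF _ lim])
  show "((\<lambda>r. L + K / ln r) \<longlongrightarrow> L) (at_right 0)"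
    using tendsto_add[OF tendsto_const tendsto_const_divide_ln_at_right_0] by simp
  show "\<forall>\<^sub>F r in at_right 0. L + K / ln r \<le> f r / ln r"
    using bound eventually_at_right_0_less_1
  proof eventually_elim
    case (elim r)
    then have "ln r < 0"
      by simp
    then have "L + K / ln r = (L * ln r + K) / ln r"
      by (simp add: field_simps)
    also have "\<dots> \<le> f r / ln r"
      using elim \<open>ln r < 0\<close> by (intro divide_right_mono_neg) auto
    finally show ?case .
  qed
qed simp

lemma log_scale_index:
  assumes b: "1 < b" and r: "0 < r" "r < 1"
  obtains n :: nat where "b ^ n * r \<le> 1" "1 < b ^ Suc n * r"
    "real n \<le> - log b r" "- log b r < real n + 1"
proof
  let ?t = "- log b r"
  define n where "n = nat \<lfloor>?t\<rfloor>"
  have "0 \<le> ?t"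
    using b r by simp
  then show n: "real n \<le> ?t" "?t < real n + 1"
    unfolding n_def by linarith+
  have t: "b powr ?t = 1 / r"
    using b r by (simp add: powr_minus_divide)
  have "b ^ n = b powr real n"
    using b by (simp add: powr_realpow)
  also have "\<dots> \<le> 1 / r"
    using n b by (simp flip: t)
  finally show "b ^ n * r \<le> 1"
    using r by (simp add: field_simps)
  have "1 / r < b powr (real n + 1)"
    using n b by (simp flip: t)
  also have "\<dots> = b ^ Suc n"
    using b by (simp add: powr_realpow powr_add)
  finally show "1 < b ^ Suc n * r"
    using r by (simp add: field_simps)
qed

section \<open>Digit matrices\<close>

definition digit_mat :: "nat \<Rightarrow> nat \<Rightarrow> real mat" where
  "digit_mat d i = mat 3 3 (\<lambda>(r, s). of_bool (int r - 1 + int i - (int s - 1) * int d \<in> {0..int d}))"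

fun word_mat :: "nat \<Rightarrow> nat list \<Rightarrow> real mat" where
  "word_mat d [] = 1\<^sub>m 3"
| "word_mat d (i # \<sigma>) = word_mat d \<sigma> * digit_mat d i"

lemma digit_mat_carrier [simp]: "digit_mat d i \<in> carrier_mat 3 3"
  by (simp add: digit_mat_def)

lemma word_mat_carrier [simp]: "word_mat d \<sigma> \<in> carrier_mat 3 3"
  by (induction \<sigma>) auto

lemma index_digit_mat:
  "r < 3 \<Longrightarrow> s < 3 \<Longrightarrow>
    digit_mat d i $$ (r, s) = of_bool (int r - 1 + int i - (int s - 1) * int d \<in> {0..int d})"
  by (simp add: digit_mat_def)

lemma dim_digit_mat [simp]: "dim_row (digit_mat d i) = 3" "dim_col (digit_mat d i) = 3"
  by (simp_all add: digit_mat_def)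

lemma dim_word_mat [simp]: "dim_row (word_mat d \<sigma>) = 3" "dim_col (word_mat d \<sigma>) = 3"
  using word_mat_carrier by blast+

lemma word_mat_append: "word_mat d (\<sigma> @ \<tau>) = word_mat d \<tau> * word_mat d \<sigma>"
  by (induction \<sigma>) (auto simp: assoc_mult_mat[of _ 3 3 _ 3 _ 3] right_mult_one_mat[of _ 3 3])

lemma word_mat_snoc: "word_mat d (\<sigma> @ [i]) = digit_mat d i * word_mat d \<sigma>"
  by (simp add: word_mat_append left_mult_one_mat[of _ 3 3])

lemma word_mat_replicate: "word_mat d (concat (replicate n \<tau>)) = word_mat d \<tau> ^\<^sub>m n"
  by (induction n) (auto simp: word_mat_append carrier_matD[OF word_mat_carrier])

lemma sum_lessThan_3: "(\<Sum>l<3::nat. f l) = f 0 + f 1 + (f 2 :: 'a :: comm_monoid_add)"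
  by (simp add: lessThan_nat_numeral add_ac)

lemma index_mult_mat_3:
  assumes "A \<in> carrier_mat 3 3" "B \<in> carrier_mat 3 3" "r < 3" "s < 3"
  shows "(A * B) $$ (r, s) = A $$ (r, 0) * B $$ (0, s) + A $$ (r, 1) * B $$ (1, s) + A $$ (r, 2) * B $$ (2, s)"
  using index_mult_mat_sum[OF assms] by (simp add: sum_lessThan_3)

lemma index_mult_mat_vec_3:
  assumes "A \<in> carrier_mat 3 3" "v \<in> carrier_vec 3" "r < 3"
  shows "(A *\<^sub>v v) $ r = A $$ (r, 0) * v $ 0 + A $$ (r, 1) * v $ 1 + A $$ (r, 2) * v $ 2"
  using assms by (simp add: scalar_prod_def atLeast0LessThan sum_lessThan_3)

lemma less_3_cases: "(r :: nat) < 3 \<Longrightarrow> r = 0 \<or> r = 1 \<or> r = 2"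
  by linarith

lemma eq_vec_3I:
  fixes v w :: "'a vec"
  assumes "v \<in> carrier_vec 3" "w \<in> carrier_vec 3" "v $ 0 = w $ 0" "v $ 1 = w $ 1" "v $ 2 = w $ 2"
  shows "v = w"
  using assms by (intro eq_vecI) (auto dest: less_3_cases)

(* Bounding the adjacent sums as well makes the entrywise Fibonacci bound inductive. *)
definition fib_bounded :: "nat \<Rightarrow> real \<Rightarrow> real \<Rightarrow> real \<Rightarrow> bool" where
  "fib_bounded n x y z \<longleftrightarrow> 0 \<le> x \<and> 0 \<le> y \<and> 0 \<le> z
     \<and> x \<le> fib (Suc n) \<and> y \<le> fib (Suc n) \<and> z \<le> fib (Suc n)
     \<and> x + y \<le> fib (Suc (Suc n)) \<and> y + z \<le> fib (Suc (Suc n))"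

lemma fib_bounded_digit_mat:
  assumes bounded: "fib_bounded n x y z" and d: "2 \<le> d" and i: "i \<le> d"
  defines "E \<equiv> digit_mat d i"
  shows "fib_bounded (Suc n)
    (E $$ (0, 0) * x + E $$ (0, 1) * y + E $$ (0, 2) * z)
    (E $$ (1, 0) * x + E $$ (1, 1) * y + E $$ (1, 2) * z)
    (E $$ (2, 0) * x + E $$ (2, 1) * y + E $$ (2, 2) * z)"
proof -
  have "real (fib (Suc n)) \<le> fib (Suc (Suc n))"
    using fib_Suc_mono[of "Suc n"] by simp
  moreover have "real (fib (Suc (Suc (Suc n)))) = fib (Suc (Suc n)) + fib (Suc n)"
    by simp
  moreover consider "i = 0" | "i = 1" | "i + 1 = d" | "i = d" | "2 \<le> i \<and> i + 2 \<le> d"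
    using i by linarith
  ultimately show ?thesis
    using bounded d unfolding fib_bounded_def E_def digit_mat_def
    by cases auto
qed

lemma word_mat_fib_bounded:
  assumes d: "2 \<le> d" and \<sigma>: "set \<sigma> \<subseteq> {0..d}" and s: "s < 3"
  shows "fib_bounded (length \<sigma>) (word_mat d \<sigma> $$ (0, s)) (word_mat d \<sigma> $$ (1, s)) (word_mat d \<sigma> $$ (2, s))"
  using \<sigma>
proof (induction \<sigma> rule: rev_induct)
  case Nil
  then show ?case using s by (auto simp: fib_bounded_def)
next
  case (snoc i \<sigma>)
  then show ?case
    using fib_bounded_digit_mat[of "length \<sigma>" _ _ _ d i] d s
    by (simp del: index_mult_mat add: word_mat_snoc index_mult_mat_3)
qed

lemma word_mat_nonneg_le_fib:
  assumes "2 \<le> d" "set \<sigma> \<subseteq> {0..d}" "r < 3" "s < 3"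
  shows "0 \<le> word_mat d \<sigma> $$ (r, s) \<and> word_mat d \<sigma> $$ (r, s) \<le> fib (Suc (length \<sigma>))"
  using less_3_cases[OF \<open>r < 3\<close>] word_mat_fib_bounded[OF assms(1,2,4)]
  by (auto simp: fib_bounded_def)

lemma word_mat_centre_ge_1:
  assumes d: "2 \<le> d" and \<sigma>: "set \<sigma> \<subseteq> {0..d}"
  shows "1 \<le> word_mat d \<sigma> $$ (1, 1)"
  using \<sigma>
proof (induction \<sigma>)
  case (Cons i \<sigma>)
  then have "1 \<le> word_mat d \<sigma> $$ (1, 1) * digit_mat d i $$ (1, 1)"
    by (simp add: digit_mat_def)
  also have "\<dots> \<le> (word_mat d (i # \<sigma>)) $$ (1, 1)"
    using word_mat_nonneg_le_fib[OF d, of \<sigma>] Cons.prems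
    by (simp del: index_mult_mat add: index_mult_mat_3 digit_mat_def)
  finally show ?case .
qed simp

lemma spectral_radius_digit_mat_1:
  assumes d: "3 \<le> d"
  shows "spectral_radius (map_mat complex_of_real (digit_mat d 1)) \<le> 1"
proof -
  let ?A = "map_mat complex_of_real (digit_mat d 1)"
  have A: "?A \<in> carrier_mat 3 3" and "0 < (3::nat)"
    by simp_all
  obtain k v where v: "v \<in> carrier_vec 3" "v \<noteq> 0\<^sub>v 3" "?A *\<^sub>v v = k \<cdot>\<^sub>v v"
    and k: "spectral_radius ?A = cmod k"
    using spectral_radius_attained[OF A \<open>0 < 3\<close>] .
  have row: "k * v $ r = (?A *\<^sub>v v) $ r" if "r < 3" for r
    using v that by simp
  have eq0: "k * v $ 0 = v $ 0 + v $ 1"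
    and eq1: "k * v $ 1 = v $ 1"
    and eq2: "k * v $ 2 = v $ 1"
    using row[of 0] row[of 1] row[of 2] v(1) d
    by (simp_all del: index_mult_mat_vec add: index_mult_mat_vec_3 digit_mat_def)
  have "k = 1 \<or> k = 0"
  proof (cases "v $ 1 = 0")
    case True
    have "v $ 0 \<noteq> 0 \<or> v $ 2 \<noteq> 0"
    proof (rule ccontr)
      assume "\<not> ?thesis"
      then have "v = 0\<^sub>v 3"
        using True v(1) by (intro eq_vec_3I) auto
      with v(2) show False ..
    qed
    then show ?thesis
      using eq0 eq2 True by auto
  qed (use eq1 in simp)
  then show ?thesis
    using k by auto
qed

definition golden_vec :: "real vec" where
  "golden_vec = vec 3 (\<lambda>r. if r = 0 then 1 else if r = 1 then golden_ratio else 1 / golden_ratio)"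

lemma golden_vec_eigenvector:
  assumes d: "2 \<le> d"
  shows "eigenvector (word_mat d [0, d]) golden_vec (golden_ratio\<^sup>2)"
proof -
  define u :: "real vec" where
    "u = vec 3 (\<lambda>r. if r = 0 then 1 / golden_ratio else if r = 1 then golden_ratio else 1)"
  have v: "golden_vec \<in> carrier_vec 3" and u: "u \<in> carrier_vec 3"
    by (simp_all add: golden_vec_def u_def)
  have "golden_ratio \<noteq> 0"
    using golden_ratio_gt_1 by simp
  note simps = index_mult_mat_vec_3 index_digit_mat golden_vec_def u_def carrier_dim_vec
    power2_eq_square field_simps
  have E0: "digit_mat d 0 *\<^sub>v golden_vec = golden_ratio \<cdot>\<^sub>v u"
    using u v d golden_ratio_squared \<open>golden_ratio \<noteq> 0\<close>
    by (intro eq_vec_3I) (simp_all del: index_mult_mat_vec add: simps)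
  have Ed: "digit_mat d d *\<^sub>v u = golden_ratio \<cdot>\<^sub>v golden_vec"
    using u v d golden_ratio_squared \<open>golden_ratio \<noteq> 0\<close>
    by (intro eq_vec_3I) (simp_all del: index_mult_mat_vec add: simps)
  have "word_mat d [0, d] *\<^sub>v golden_vec = digit_mat d d *\<^sub>v (digit_mat d 0 *\<^sub>v golden_vec)"
    using v by (simp add: left_mult_one_mat[of _ 3 3] assoc_mult_mat_vec[of _ 3 3 _ 3])
  also have "\<dots> = golden_ratio\<^sup>2 \<cdot>\<^sub>v golden_vec"
    using u by (simp add: E0 Ed mult_mat_vec[OF digit_mat_carrier u] smult_smult_assoc power2_eq_square)
  finally have "word_mat d [0, d] *\<^sub>v golden_vec = golden_ratio\<^sup>2 \<cdot>\<^sub>v golden_vec" .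
  moreover have "golden_vec $ 0 \<noteq> 0\<^sub>v 3 $ 0"
    by (simp add: golden_vec_def)
  then have "golden_vec \<noteq> 0\<^sub>v 3"
    by metis
  ultimately show ?thesis
    using v by (simp add: eigenvector_def)
qed

section \<open>Spectral exponents for uniform weights\<close>

locale uniform_weights =
  fixes d :: nat and p :: "nat \<Rightarrow> real"
  assumes d_ge_3: "3 \<le> d" and p_uniform: "\<And>i. p i = 1 / (real d + 1)"
begin

definition q :: real where
  "q = 1 / (real d + 1)"

lemma q_pos: "0 < q"
  by (simp add: q_def)

lemma golden_ratio_q_pos: "0 < golden_ratio * q"
  using golden_ratio_gt_1 q_pos by simp

lemma golden_ratio_q_less_1: "golden_ratio * q < 1"
proof -
  have "golden_ratio * q < 2 * q"
    using golden_ratio_less_2 q_pos by simp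
  also have "\<dots> \<le> 1"
    using d_ge_3 by (simp add: q_def)
  finally show ?thesis .
qed

lemma ln_q: "ln q = - ln (real d + 1)"
  by (simp add: q_def ln_div)

lemma Mi_uniform: "Mi d d p i = map_mat complex_of_real (q \<cdot>\<^sub>m digit_mat d i)"
  by (rule eq_matI) (auto simp: Mi_def aa_def pext_def digit_mat_def p_uniform q_def)

lemma Mw_uniform: "Mw d d p \<sigma> = map_mat complex_of_real (q ^ length \<sigma> \<cdot>\<^sub>m word_mat d \<sigma>)"
proof (induction \<sigma>)
  case Nil
  show ?case by (rule eq_matI) (auto simp: aa_def)
next
  case (Cons i \<sigma>)
  have "Mw d d p (i # \<sigma>)
      = map_mat complex_of_real (q ^ length \<sigma> \<cdot>\<^sub>m word_mat d \<sigma> * (q \<cdot>\<^sub>m digit_mat d i))"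
    by (simp add: Cons.IH Mi_uniform of_real_hom.mat_hom_mult[of _ 3 3 _ 3])
  also have "q ^ length \<sigma> \<cdot>\<^sub>m word_mat d \<sigma> * (q \<cdot>\<^sub>m digit_mat d i)
      = q ^ length (i # \<sigma>) \<cdot>\<^sub>m word_mat d (i # \<sigma>)"
    by (simp add: mult_smult_distrib[of _ 3 3 _ 3] mult_smult_assoc_mat[of _ 3 3 _ 3]
        smult_smult_mat mult.commute)
  finally show ?case .
qed

lemma spectral_radius_Mw_le:
  assumes \<sigma>: "set \<sigma> \<subseteq> {0..d}"
  shows "spectral_radius (Mw d d p \<sigma>) \<le> 3 * (golden_ratio * q) ^ length \<sigma>"
proof -
  let ?n = "length \<sigma>"
  have "spectral_radius (Mw d d p \<sigma>) \<le> 3 * (q ^ ?n * fib (Suc ?n))"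
    unfolding Mw_uniform
  proof (rule spectral_radius_le_row_sum)
    fix r :: nat assume "r < 3"
    have "(\<Sum>s<3. cmod (map_mat complex_of_real (q ^ ?n \<cdot>\<^sub>m word_mat d \<sigma>) $$ (r, s)))
        = (\<Sum>s<3. q ^ ?n * word_mat d \<sigma> $$ (r, s))"
      using \<open>r < 3\<close> word_mat_nonneg_le_fib[of d \<sigma> r] d_ge_3 \<sigma> q_pos
      by (intro sum.cong) (auto simp: norm_mult norm_power)
    also have "\<dots> \<le> (\<Sum>s<3::nat. q ^ ?n * fib (Suc ?n))"
      using \<open>r < 3\<close> word_mat_nonneg_le_fib[of d \<sigma> r] d_ge_3 \<sigma> q_pos
      by (intro sum_mono mult_left_mono) auto
    finally show "(\<Sum>s<3. cmod (map_mat complex_of_real (q ^ ?n \<cdot>\<^sub>m word_mat d \<sigma>) $$ (r, s)))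
        \<le> 3 * (q ^ ?n * fib (Suc ?n))"
      by simp
  qed simp_all
  also have "\<dots> \<le> 3 * (q ^ ?n * golden_ratio ^ ?n)"
    using fib_Suc_le_golden_ratio_power q_pos by (intro mult_left_mono) auto
  finally show ?thesis
    by (simp add: power_mult_distrib mult.commute)
qed

lemma spectral_radius_Mw_ge:
  assumes \<sigma>: "set \<sigma> \<subseteq> {0..d}"
  shows "q ^ length \<sigma> \<le> spectral_radius (Mw d d p \<sigma>)"
proof -
  let ?B = "q ^ length \<sigma> \<cdot>\<^sub>m word_mat d \<sigma>"
  have "q ^ length \<sigma> \<le> ?B $$ (1, 1)"
    using word_mat_centre_ge_1[of d \<sigma>] d_ge_3 \<sigma> q_pos by simp
  also have "\<dots> \<le> spectral_radius (Mw d d p \<sigma>)"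
    unfolding Mw_uniform
    using word_mat_nonneg_le_fib[of d \<sigma>] d_ge_3 \<sigma> q_pos
    by (intro nonneg_mat_diag_le_spectral_radius[of _ 3]) auto
  finally show ?thesis .
qed

lemma spectral_radius_Mw_1: "spectral_radius (Mw d d p [1]) = q"
proof (rule antisym)
  have "Mw d d p [1] = complex_of_real q \<cdot>\<^sub>m map_mat complex_of_real (digit_mat d 1)"
    unfolding Mw_uniform by (simp add: map_mat_of_real_smult left_mult_one_mat[of _ 3 3])
  also have "spectral_radius \<dots> \<le> cmod (complex_of_real q) * spectral_radius (map_mat complex_of_real (digit_mat d 1))"
    using q_pos by (intro spectral_radius_smult_le[of _ 3]) auto
  also have "\<dots> \<le> q"
    using spectral_radius_digit_mat_1[OF d_ge_3] q_pos by (simp add: mult_left_le)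
  finally show "spectral_radius (Mw d d p [1]) \<le> q" .
qed (use spectral_radius_Mw_ge[of "[1]"] d_ge_3 in simp)

lemma spectral_radius_Mw_golden:
  "(golden_ratio * q) ^ (2 * n) \<le> spectral_radius (Mw d d p (concat (replicate n [0, d])))"
proof -
  let ?P = "word_mat d [0, d]"
  let ?A = "map_mat complex_of_real (?P ^\<^sub>m n)"
  have P: "?P \<in> carrier_mat 3 3"
    by (rule word_mat_carrier)
  then have A: "?A \<in> carrier_mat 3 3"
    by simp
  have "eigenvector ?P golden_vec (golden_ratio\<^sup>2)"
    using golden_vec_eigenvector d_ge_3 by simp
  then have "eigenvector (?P ^\<^sub>m n) golden_vec (golden_ratio ^ (2 * n))"
    using eigenvector_pow[OF P] P by (auto simp: eigenvector_def power_mult)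
  then have "eigenvalue (?P ^\<^sub>m n) (golden_ratio ^ (2 * n))"
    unfolding eigenvalue_def by blast
  then have "eigenvalue ?A (complex_of_real (golden_ratio ^ (2 * n)))"
    by (rule of_real_hom.eigenvalue_hom[OF pow_carrier_mat[OF P]])
  from eigenvalue_norm_le_spectral_radius[OF A this]
  have golden: "golden_ratio ^ (2 * n) \<le> spectral_radius ?A"
    using golden_ratio_gt_1 by (simp only: norm_of_real)
  have "Mw d d p (concat (replicate n [0, d])) = complex_of_real (q ^ (2 * n)) \<cdot>\<^sub>m ?A"
    by (simp add: Mw_uniform word_mat_replicate map_mat_of_real_smult length_concat
        sum_list_replicate mult_2)
  then have "spectral_radius (Mw d d p (concat (replicate n [0, d]))) = q ^ (2 * n) * spectral_radius ?A"
    using spectral_radius_smult[OF A, of "complex_of_real (q ^ (2 * n))"] q_pos by (simp add: norm_power)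
  then show ?thesis
    using golden q_pos by (simp add: power_mult_distrib mult.commute mult_left_mono)
qed

lemma rho_tilde_uniform: "rho_tilde d d p = golden_ratio * q"
proof -
  define S where
    "S k = {spectral_radius (Mw d d p \<sigma>) | \<sigma>. length \<sigma> = k \<and> set \<sigma> \<subseteq> {0..d}}" for k
  have S_finite: "finite (S k)" for k
  proof -
    have "S k = (\<lambda>\<sigma>. spectral_radius (Mw d d p \<sigma>)) ` {\<sigma>. set \<sigma> \<subseteq> {0..d} \<and> length \<sigma> = k}"
      unfolding S_def by auto
    then show ?thesis
      by (simp add: finite_lists_length_eq)
  qed
  have S_ne: "S k \<noteq> {}" for k
    unfolding S_def by (auto intro!: exI[of _ "replicate k 0"])
  have upper: "Sup (S k) \<le> 3 * (golden_ratio * q) ^ k" for k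
    using S_ne spectral_radius_Mw_le unfolding S_def by (intro cSup_least) auto
  have lower: "(golden_ratio * q) ^ (2 * n) \<le> Sup (S (2 * n))" for n
  proof -
    let ?\<sigma> = "concat (replicate n [0, d])"
    have "spectral_radius (Mw d d p ?\<sigma>) \<in> S (2 * n)"
      unfolding S_def
      by (intro CollectI exI[of _ ?\<sigma>]) (auto simp: length_concat sum_list_replicate)
    then show ?thesis
      using spectral_radius_Mw_golden[of n] S_finite
      by (meson bdd_above_finite cSup_upper order.trans)
  qed
  have "limsup (\<lambda>k. ereal (root k (Sup (S k)))) = ereal (golden_ratio * q)"
    by (rule limsup_root_eq[OF golden_ratio_q_pos _ upper, of "\<lambda>n. 2 * n"])
      (auto intro: strict_monoI lower)
  then show ?thesis
    unfolding rho_tilde_def S_def by simp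
qed

definition min_local_dim :: real where
  "min_local_dim = - ln (golden_ratio * q) / ln (real d)"

lemma alpha_low_uniform: "alpha_low d d p = min_local_dim"
  by (simp add: alpha_low_def min_local_dim_def rho_tilde_uniform)

lemma alpha_star_uniform: "alpha_star d d p = ln (real d + 1) / ln (real d)"
proof -
  let ?T = "{root (length \<sigma>) (spectral_radius (Mw d d p \<sigma>)) | \<sigma>.
    \<sigma> \<noteq> [] \<and> set \<sigma> \<subseteq> {0..d} \<and> hd \<sigma> \<notin> {0, d}}"
  have "Inf ?T = q"
  proof (rule cInf_eq_minimum)
    show "q \<in> ?T"
      using spectral_radius_Mw_1 d_ge_3 by (intro CollectI exI[of _ "[1]"]) auto
  next
    fix y assume "y \<in> ?T"
    then obtain \<sigma> where \<sigma>: "\<sigma> \<noteq> []" "set \<sigma> \<subseteq> {0..d}"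
      and y: "y = root (length \<sigma>) (spectral_radius (Mw d d p \<sigma>))"
      by auto
    have "q = root (length \<sigma>) (q ^ length \<sigma>)"
      using \<sigma>(1) q_pos by (simp add: real_root_power_cancel)
    also have "\<dots> \<le> y"
      using y spectral_radius_Mw_ge[OF \<sigma>(2)] \<sigma>(1) by simp
    finally show "q \<le> y" .
  qed
  then show ?thesis
    by (simp add: alpha_star_def ln_q)
qed

lemma alpha_up_uniform: "alpha_up d p = ln (real d + 1) / ln (real d)"
  using ln_q by (simp add: alpha_up_def p_uniform q_def)

lemma min_local_dim_eq: "min_local_dim = (ln (real d + 1) - ln golden_ratio) / ln (real d)"
  using golden_ratio_gt_1 q_pos by (simp add: min_local_dim_def ln_mult ln_q)

end

section \<open>Self-similar measures\<close>

definition digit_words :: "nat \<Rightarrow> nat \<Rightarrow> nat list set" where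
  "digit_words m n = {w. set w \<subseteq> {..m} \<and> length w = n}"

definition digits_value :: "nat \<Rightarrow> nat list \<Rightarrow> int" where
  "digits_value d w = foldl (\<lambda>v i. int d * v + int i) 0 w"

definition rescale :: "nat \<Rightarrow> nat \<Rightarrow> int \<Rightarrow> real set \<Rightarrow> real set" where
  "rescale d n v A = (\<lambda>x. real d ^ n * x - real_of_int v) ` A"

lemma digits_value_Nil [simp]: "digits_value d [] = 0"
  by (simp add: digits_value_def)

lemma digits_value_snoc [simp]: "digits_value d (w @ [i]) = int d * digits_value d w + int i"
  by (simp add: digits_value_def)

lemma digits_value_nonneg: "0 \<le> digits_value d w"
  by (induction w rule: rev_induct) auto

lemma finite_digit_words: "finite (digit_words m n)"
  unfolding digit_words_def by (rule finite_lists_length_eq) simp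

lemma digit_words_0 [simp]: "digit_words m 0 = {[]}"
  by (auto simp: digit_words_def)

lemma digit_words_Suc: "digit_words m (Suc n) = (\<lambda>(w, i). w @ [i]) ` (digit_words m n \<times> {..m})"
proof
  show "digit_words m (Suc n) \<subseteq> (\<lambda>(w, i). w @ [i]) ` (digit_words m n \<times> {..m})"
  proof
    fix w assume w: "w \<in> digit_words m (Suc n)"
    then have "w \<noteq> []"
      by (auto simp: digit_words_def)
    then have "w = butlast w @ [last w]"
      by simp
    moreover have "last w \<in> set w"
      using \<open>w \<noteq> []\<close> by simp
    then have "butlast w \<in> digit_words m n" "last w \<in> {..m}"
      using w by (auto simp: digit_words_def dest: in_set_butlastD)
    ultimately show "w \<in> (\<lambda>(w, i). w @ [i]) ` (digit_words m n \<times> {..m})"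
      by force
  qed
qed (auto simp: digit_words_def)

lemma sum_digit_words_Suc:
  "(\<Sum>w\<in>digit_words m (Suc n). f w) = (\<Sum>w\<in>digit_words m n. \<Sum>i\<le>m. f (w @ [i]))"
proof -
  have "inj_on (\<lambda>(w, i). w @ [i]) (digit_words m n \<times> {..m})"
    by (auto simp: inj_on_def)
  then show ?thesis
    unfolding digit_words_Suc
    by (simp add: sum.reindex sum.cartesian_product comp_def prod.case_distrib)
qed

lemma digits_value_le:
  assumes "w \<in> digit_words m n" and "0 < d"
  shows "(int d - 1) * digits_value d w \<le> int m * (int d ^ n - 1)"
  using assms
proof (induction n arbitrary: w)
  case (Suc n)
  then obtain w' i where w: "w = w' @ [i]" "w' \<in> digit_words m n" "i \<le> m"
    unfolding digit_words_Suc by auto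
  have "(int d - 1) * digits_value d w
      = int d * ((int d - 1) * digits_value d w') + (int d - 1) * int i"
    using w(1) by (simp add: algebra_simps)
  also have "\<dots> \<le> int d * (int m * (int d ^ n - 1)) + (int d - 1) * int m"
    using Suc.IH[OF w(2)] w(3) \<open>0 < d\<close> by (intro add_mono mult_left_mono) auto
  also have "\<dots> = int m * (int d ^ Suc n - 1)"
    by (simp add: algebra_simps)
  finally show ?case .
qed simp

lemma digits_value_le_hull:
  assumes w: "w \<in> digit_words m n" and d: "2 \<le> d"
  shows "real_of_int (digits_value d w) \<le> real m / (real d - 1) * real d ^ n"
proof -
  have "real_of_int ((int d - 1) * digits_value d w) \<le> real_of_int (int m * (int d ^ n - 1))"
    using digits_value_le[OF w, of d] d by (simp only: of_int_le_iff)
  then have "(real d - 1) * real_of_int (digits_value d w) \<le> real m * (real d ^ n - 1)"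
    by simp
  also have "\<dots> \<le> real m * real d ^ n"
    by (simp add: mult_left_mono)
  finally show ?thesis
    using d by (simp add: field_simps)
qed

lemma rescale_far_outside:
  assumes w: "w \<in> digit_words m n" and d: "2 \<le> d"
  defines "c \<equiv> real m / (real d - 1)"
  shows "rescale d n (digits_value d w) ({x. x < - \<delta>} \<union> {x. c + \<delta> < x})
    \<subseteq> {y. \<delta> * real d ^ n < \<bar>y\<bar>}"
proof
  let ?v = "real_of_int (digits_value d w)"
  have v: "0 \<le> ?v" "?v \<le> c * real d ^ n"
    using digits_value_nonneg digits_value_le_hull[OF w d] by (simp_all add: c_def)
  fix y assume "y \<in> rescale d n (digits_value d w) ({x. x < - \<delta>} \<union> {x. c + \<delta> < x})"
  then obtain x where x: "x < - \<delta> \<or> c + \<delta> < x" and y: "y = real d ^ n * x - ?v"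
    unfolding rescale_def by auto
  have "0 < real d ^ n"
    using d by simp
  from x show "y \<in> {y. \<delta> * real d ^ n < \<bar>y\<bar>}"
  proof
    assume "x < - \<delta>"
    then have "real d ^ n * x < real d ^ n * (- \<delta>)"
      using \<open>0 < real d ^ n\<close> by (intro mult_strict_left_mono)
    then show ?thesis
      using y v by (simp add: mult.commute)
  next
    assume "c + \<delta> < x"
    then have "real d ^ n * (c + \<delta>) < real d ^ n * x"
      using \<open>0 < real d ^ n\<close> by (intro mult_strict_left_mono)
    then show ?thesis
      using y v by (simp add: algebra_simps)
  qed
qed

lemma rescale_Suc:
  "(\<lambda>x. real d * x - real i) ` rescale d n v A = rescale d (Suc n) (int d * v + int i) A"
  unfolding rescale_def image_image by (intro image_cong refl) (simp add: algebra_simps)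

lemma rescale_borel:
  assumes "0 < d" "A \<in> sets borel"
  shows "rescale d n v A \<in> sets borel"
proof -
  have "rescale d n v A = (\<lambda>y. (y + real_of_int v) / real d ^ n) -` A"
  proof
    show "(\<lambda>y. (y + real_of_int v) / real d ^ n) -` A \<subseteq> rescale d n v A"
    proof
      fix y assume "y \<in> (\<lambda>y. (y + real_of_int v) / real d ^ n) -` A"
      moreover have "y = real d ^ n * ((y + real_of_int v) / real d ^ n) - real_of_int v"
        using \<open>0 < d\<close> by simp
      ultimately show "y \<in> rescale d n v A"
        unfolding rescale_def by blast
    qed
  qed (use \<open>0 < d\<close> in \<open>auto simp: rescale_def\<close>)
  moreover have "(\<lambda>y. (y + real_of_int v) / real d ^ n) \<in> borel_measurable borel"
    by measurable
  ultimately show ?thesis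
    using assms(2) by (metis measurable_sets_borel)
qed

locale self_similar_measure =
  fixes d m :: nat and p :: "nat \<Rightarrow> real" and \<mu> :: "real measure"
  assumes d_ge_2: "2 \<le> d" and ssm: "is_ssm d m p \<mu>"
begin

lemma prob_space: "prob_space \<mu>"
  and sets_eq: "sets \<mu> = sets borel"
  and compact_support: "\<exists>K. compact K \<and> emeasure \<mu> (UNIV - K) = 0"
  and self_similar: "\<And>A. A \<in> sets borel \<Longrightarrow>
        measure \<mu> A = (\<Sum>i\<le>m. p i * measure \<mu> ((\<lambda>x. real d * x - real i) ` A))"
  using ssm unfolding is_ssm_def by auto

lemma space_eq: "space \<mu> = UNIV"
  using sets_eq by (metis sets_eq_imp_space_eq space_borel)

lemma measure_iterate:
  assumes A: "A \<in> sets borel"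
  shows "measure \<mu> A = (\<Sum>w\<in>digit_words m n.
    prod_list (map p w) * measure \<mu> (rescale d n (digits_value d w) A))"
proof (induction n)
  case 0
  have "rescale d 0 0 A = A"
    unfolding rescale_def by simp
  then show ?case by simp
next
  case (Suc n)
  let ?f = "\<lambda>w. prod_list (map p w) * measure \<mu> (rescale d (Suc n) (digits_value d w) A)"
  have step: "measure \<mu> (rescale d n (digits_value d w) A)
      = (\<Sum>i\<le>m. p i * measure \<mu> (rescale d (Suc n) (digits_value d (w @ [i])) A))" for w
  proof -
    have "rescale d n (digits_value d w) A \<in> sets borel"
      using rescale_borel[OF _ A] d_ge_2 by simp
    from self_similar[OF this] show ?thesis
      by (simp only: rescale_Suc digits_value_snoc)
  qed
  have "measure \<mu> A = (\<Sum>w\<in>digit_words m n. \<Sum>i\<le>m. ?f (w @ [i]))"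
    unfolding Suc.IH step by (simp add: sum_distrib_left mult.assoc del: digits_value_snoc)
  also have "\<dots> = (\<Sum>w\<in>digit_words m (Suc n). ?f w)"
    by (rule sum_digit_words_Suc[symmetric])
  finally show ?case .
qed

lemma measure_far_outside_zero:
  assumes \<delta>: "0 < \<delta>"
  defines "c \<equiv> real m / (real d - 1)"
  shows "measure \<mu> ({x. x < - \<delta>} \<union> {x. c + \<delta> < x}) = 0"
proof -
  let ?A = "{x. x < - \<delta>} \<union> {x. c + \<delta> < x}"
  have A: "?A \<in> sets borel"
    by measurable
  obtain K where K: "compact K" "emeasure \<mu> (UNIV - K) = 0"
    using compact_support by blast
  have null: "UNIV - K \<in> null_sets \<mu>"
    using K sets_eq by (auto simp: compact_imp_closed null_sets_def)
  obtain R where R: "\<And>x. x \<in> K \<Longrightarrow> \<bar>x\<bar> \<le> R"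
    using compact_imp_bounded[OF K(1)] unfolding bounded_iff by auto
  obtain n where "R / \<delta> < real d ^ n"
    using real_arch_pow[of "real d" "R / \<delta>"] d_ge_2 by auto
  then have Rn: "R \<le> \<delta> * real d ^ n"
    using \<delta> by (simp add: field_simps)
  have "rescale d n (digits_value d w) ?A \<in> null_sets \<mu>" if "w \<in> digit_words m n" for w
  proof (rule null_sets_subset[OF null])
    show "rescale d n (digits_value d w) ?A \<subseteq> UNIV - K"
      using rescale_far_outside[OF that d_ge_2, of \<delta>] R Rn unfolding c_def by force
  qed (use rescale_borel[OF _ A] d_ge_2 sets_eq in auto)
  then show ?thesis
    using measure_iterate[OF A, of n] by (simp add: measure_eq_0_null_sets)
qed

lemma null_outside_hull: "UNIV - {0..real m / (real d - 1)} \<in> null_sets \<mu>"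
proof -
  let ?c = "real m / (real d - 1)"
  let ?A = "\<lambda>k::nat. {x. x < - (1 / Suc k)} \<union> {x. ?c + 1 / Suc k < x}"
  have A: "?A k \<in> sets \<mu>" for k
    using sets_eq by simp
  have "?A k \<in> null_sets \<mu>" for k
    using measure_far_outside_zero[of "1 / Suc k"] A prob_space
    by (simp add: finite_measure.emeasure_eq_measure[OF prob_space.finite_measure] null_sets_def)
  then have "(\<Union>k. ?A k) \<in> null_sets \<mu>"
    by blast
  moreover have "UNIV - {0..?c} \<subseteq> (\<Union>k. ?A k)"
  proof
    fix x assume "x \<in> UNIV - {0..?c}"
    then have "0 < max (- x) (x - ?c)"
      by auto
    then obtain k where "inverse (real (Suc k)) < max (- x) (x - ?c)"
      using reals_Archimedean by blast
    then have "x < - inverse (real (Suc k)) \<or> ?c + inverse (real (Suc k)) < x"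
      by (auto simp: max_def split: if_splits)
    then show "x \<in> (\<Union>k. ?A k)"
      by (auto simp: inverse_eq_divide)
  qed
  ultimately show ?thesis
    using sets_eq by (auto intro: null_sets_subset)
qed

end

section \<open>Counting digit words by value\<close>

definition word_count :: "nat \<Rightarrow> nat \<Rightarrow> int \<Rightarrow> nat" where
  "word_count d n s = card {w \<in> digit_words d n. digits_value d w = s}"

lemma word_count_0: "word_count d 0 s = of_bool (s = 0)"
  by (simp add: word_count_def Collect_conv_if)

lemma last_digit_cases:
  fixes d k i r :: int
  assumes d: "2 \<le> d" and eq: "d * k + i = r" and i: "0 \<le> i" "i \<le> d" and r: "0 \<le> r" "r < d"
  shows "(k = 0 \<and> i = r) \<or> (k = -1 \<and> i = d \<and> r = 0)"
proof -
  have "\<not> 1 \<le> k"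
  proof
    assume "1 \<le> k"
    then have "d * 1 \<le> d * k" using d by (intro mult_left_mono) auto
    then show False using eq i r by linarith
  qed
  moreover have "\<not> k \<le> -2"
  proof
    assume "k \<le> -2"
    then have "d * k \<le> d * (-2)" using d by (intro mult_left_mono) auto
    then show False using eq i r d by linarith
  qed
  ultimately have "k = 0 \<or> k = -1"
    by linarith
  then show ?thesis
    using eq i r by auto
qed

lemma words_with_value_Suc:
  assumes d: "2 \<le> d" and r: "0 \<le> r" "r < int d"
  shows "{w \<in> digit_words d (Suc n). digits_value d w = int d * s + r}
    = (\<lambda>w. w @ [nat r]) ` {w \<in> digit_words d n. digits_value d w = s}
      \<union> (if r = 0 then (\<lambda>w. w @ [d]) ` {w \<in> digit_words d n. digits_value d w = s - 1} else {})"
    (is "?W = ?A \<union> ?B")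
proof
  show "?W \<subseteq> ?A \<union> ?B"
  proof
    fix w' assume "w' \<in> ?W"
    then obtain w i where w: "w' = w @ [i]" "w \<in> digit_words d n" "i \<le> d"
      and val: "int d * (digits_value d w - s) + int i = r"
      unfolding digit_words_Suc by (auto simp: algebra_simps)
    from last_digit_cases[OF _ val] d r w(3)
    have "(digits_value d w = s \<and> int i = r) \<or> (digits_value d w = s - 1 \<and> i = d \<and> r = 0)"
      by auto
    then show "w' \<in> ?A \<union> ?B"
      using w by auto
  qed
qed (use r in \<open>auto simp: digit_words_def algebra_simps\<close>)

lemma word_count_Suc:
  assumes d: "2 \<le> d" and r: "0 \<le> r" "r < int d"
  shows "word_count d (Suc n) (int d * s + r)
    = word_count d n s + (if r = 0 then word_count d n (s - 1) else 0)"
proof -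
  let ?A = "(\<lambda>w. w @ [nat r]) ` {w \<in> digit_words d n. digits_value d w = s}"
  let ?B = "(\<lambda>w. w @ [d]) ` {w \<in> digit_words d n. digits_value d w = s - 1}"
  have "card ?A = word_count d n s" "card ?B = word_count d n (s - 1)"
    unfolding word_count_def by (auto intro!: card_image simp: inj_on_def)
  moreover have "finite ?A" "finite ?B" "?A \<inter> ?B = {}"
    using finite_digit_words r d by auto
  ultimately show ?thesis
    unfolding word_count_def[of _ "Suc n"] words_with_value_Suc[OF assms]
    by (cases "r = 0") (simp_all add: card_Un_disjoint)
qed

lemma word_count_Suc_multiple:
  "2 \<le> d \<Longrightarrow> word_count d (Suc n) (int d * s) = word_count d n s + word_count d n (s - 1)"
  using word_count_Suc[of d 0 n s] by simp

lemma word_count_Suc_nonmultiple: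
  "2 \<le> d \<Longrightarrow> 0 < r \<Longrightarrow> r < int d \<Longrightarrow> word_count d (Suc n) (int d * s + r) = word_count d n s"
  using word_count_Suc[of d r n s] by simp

lemma word_count_le_fib:
  assumes d: "2 \<le> d"
  shows "word_count d n s \<le> fib (Suc n) \<and> word_count d n (s - 1) + word_count d n s \<le> fib (Suc (Suc n))"
proof (induction n arbitrary: s)
  case 0
  then show ?case by (simp add: word_count_0)
next
  case (Suc n)
  define k r where "k = s div int d" and "r = s mod int d"
  have s: "s = int d * k + r" and r: "0 \<le> r" "r < int d"
    using d by (auto simp: k_def r_def)
  have IH: "word_count d n k \<le> fib (Suc n)" "word_count d n (k - 1) \<le> fib (Suc n)"
    "word_count d n (k - 1) + word_count d n k \<le> fib (Suc (Suc n))"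
    using Suc.IH[of k] Suc.IH[of "k - 1"] by auto
  have fib: "fib (Suc n) \<le> fib (Suc (Suc n))"
    "fib (Suc (Suc (Suc n))) = fib (Suc (Suc n)) + fib (Suc n)"
    by (simp_all add: fib_Suc_mono)
  consider "r = 0" | "r = 1" | "2 \<le> r"
    using r by linarith
  then show ?case
  proof cases
    case 1
    have "word_count d (Suc n) s = word_count d n k + word_count d n (k - 1)"
      using word_count_Suc_multiple[OF d, of n k] s 1 by simp
    moreover have "s - 1 = int d * (k - 1) + (int d - 1)"
      using s 1 by (simp add: algebra_simps)
    then have "word_count d (Suc n) (s - 1) = word_count d n (k - 1)"
      using d by (simp only:) (rule word_count_Suc_nonmultiple; simp)
    ultimately show ?thesis
      using IH fib by simp
  next
    case 2
    have "word_count d (Suc n) s = word_count d n k"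
      using word_count_Suc_nonmultiple[OF d, of 1 n k] s 2 d by simp
    moreover have "s - 1 = int d * k"
      using s 2 by simp
    then have "word_count d (Suc n) (s - 1) = word_count d n k + word_count d n (k - 1)"
      by (simp only: word_count_Suc_multiple[OF d])
    ultimately show ?thesis
      using IH fib by simp
  next
    case 3
    have "word_count d (Suc n) s = word_count d n k"
      using word_count_Suc_nonmultiple[OF d, of r n k] s r 3 by simp
    moreover have "s - 1 = int d * k + (r - 1)"
      using s by simp
    then have "word_count d (Suc n) (s - 1) = word_count d n k"
      using r 3 by (simp only:) (rule word_count_Suc_nonmultiple; simp)
    ultimately show ?thesis
      using IH fib by simp
  qed
qed

fun alternating_value :: "nat \<Rightarrow> nat \<Rightarrow> int" where
  "alternating_value d 0 = 0"
| "alternating_value d (Suc m) = int d * alternating_value d m + of_bool (even m)"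

lemma word_count_alternating_value:
  assumes d: "2 \<le> d"
  shows "word_count d m (alternating_value d m - 1) + word_count d m (alternating_value d m)
    = fib (Suc (Suc m))"
proof -
  have "(even m \<longrightarrow> word_count d m (alternating_value d m - 1) = fib m
                    \<and> word_count d m (alternating_value d m) = fib (Suc m))
      \<and> (odd m \<longrightarrow> word_count d m (alternating_value d m - 1) = fib (Suc m)
                    \<and> word_count d m (alternating_value d m) = fib m)"
  proof (induction m)
    case 0
    then show ?case by (simp add: word_count_0)
  next
    case (Suc m)
    let ?a = "alternating_value d m"
    have minus_one: "int d * (?a - 1) + (int d - 1) = int d * ?a - 1"
      by (simp add: algebra_simps)
    show ?case
      using Suc.IH word_count_Suc[OF d, of 1 m ?a] word_count_Suc[OF d, of 0 m ?a]
        word_count_Suc[OF d, of "int d - 1" m "?a - 1"] d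
      by (auto simp: minus_one)
  qed
  then show ?thesis
    by (cases "even m") auto
qed

(* The point d / (d^2 - 1) has base-d expansion 0.1010..., whose digits give alternating_value. *)
definition alternating_point :: "nat \<Rightarrow> real" where
  "alternating_point d = real d / (real d ^ 2 - 1)"

lemma alternating_point_shift:
  assumes d: "2 \<le> d"
  shows "real d ^ m * alternating_point d - alternating_value d m
    = (if even m then real d else 1) / (real d ^ 2 - 1)"
proof (induction m)
  case (Suc m)
  have "0 < real d ^ 2 - 1"
    using one_less_power[of "real d" 2] d by simp
  have "real d ^ Suc m * alternating_point d - alternating_value d (Suc m)
      = real d * (real d ^ m * alternating_point d - alternating_value d m) - of_bool (even m)"
    by (simp add: algebra_simps)
  also have "\<dots> = (if even (Suc m) then real d else 1) / (real d ^ 2 - 1)"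
    unfolding Suc.IH using \<open>0 < real d ^ 2 - 1\<close> by (auto simp: field_simps power2_eq_square)
  finally show ?case .
qed (simp add: alternating_point_def)

lemma sum_digit_words_value_in:
  assumes "finite S"
  shows "(\<Sum>w\<in>digit_words d n. of_bool (digits_value d w \<in> S) :: real) = (\<Sum>s\<in>S. real (word_count d n s))"
proof -
  have "(\<Sum>w\<in>digit_words d n. of_bool (digits_value d w \<in> S) :: real)
      = real (card {w \<in> digit_words d n. digits_value d w \<in> S})"
    using finite_digit_words by (simp add: sum.If_cases Int_def)
  also have "{w \<in> digit_words d n. digits_value d w \<in> S}
      = (\<Union>s\<in>S. {w \<in> digit_words d n. digits_value d w = s})"
    by auto
  also have "card \<dots> = (\<Sum>s\<in>S. word_count d n s)"
    unfolding word_count_def using assms finite_digit_words by (intro card_UN_disjoint) auto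
  finally show ?thesis
    by simp
qed

section \<open>Local dimensions for uniform weights\<close>

context uniform_weights
begin

lemma alternating_point_shift_bounds:
  "0 \<le> real d ^ n * alternating_point d - alternating_value d n"
  "real d ^ n * alternating_point d - alternating_value d n \<le> 1 / 2"
proof -
  have "3 \<le> real d"
    using d_ge_3 by simp
  moreover from this have "3 * real d \<le> real d * real d"
    by (intro mult_right_mono) auto
  ultimately have "2 * real d \<le> real d ^ 2 - 1" "0 < real d ^ 2 - 1"
    unfolding power2_eq_square by linarith+
  moreover have "0 \<le> (if even n then real d else 1)" "(if even n then real d else 1) \<le> real d"
    using \<open>3 \<le> real d\<close> by auto
  ultimately show "0 \<le> real d ^ n * alternating_point d - alternating_value d n"
    "real d ^ n * alternating_point d - alternating_value d n \<le> 1 / 2"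
    using alternating_point_shift[of d n] d_ge_3 by (simp_all add: pos_divide_le_eq)
qed

end

locale uniform_self_similar = uniform_weights d p + self_similar_measure d d p \<mu>
  for d :: nat and p :: "nat \<Rightarrow> real" and \<mu> :: "real measure"
begin

lemma measure_iterate_uniform:
  assumes "A \<in> sets borel"
  shows "measure \<mu> A = (\<Sum>w\<in>digit_words d n. q ^ n * measure \<mu> (rescale d n (digits_value d w) A))"
proof -
  have "p = (\<lambda>_. q)"
    using p_uniform by (auto simp: q_def)
  then show ?thesis
    using measure_iterate[OF assms, of n]
    by (simp add: digit_words_def map_replicate_const prod_list_replicate)
qed

lemma measure_eq_0_outside:
  assumes "B \<in> sets borel" "B \<inter> {0..3/2} = {}"
  shows "measure \<mu> B = 0"
proof -
  have "real d / (real d - 1) \<le> 3 / 2"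
    using d_ge_3 by (simp add: field_simps)
  then have "{0..real d / (real d - 1)} \<subseteq> {0..3/2}"
    by auto
  then have "B \<subseteq> UNIV - {0..real d / (real d - 1)}"
    using assms(2) by blast
  then show ?thesis
    using null_outside_hull assms(1) sets_eq
    by (auto intro: measure_eq_0_null_sets null_sets_subset)
qed

lemma measure_eq_1_inside:
  assumes "B \<in> sets borel" "{0..3/2} \<subseteq> B"
  shows "measure \<mu> B = 1"
proof -
  have "measure \<mu> (UNIV - B) = 0"
    using assms by (intro measure_eq_0_outside) auto
  then show ?thesis
    using prob_space.prob_compl[OF prob_space, of B] assms(1) sets_eq space_eq by simp
qed

lemma measure_le_word_count:
  assumes A: "A \<in> sets borel" and S: "finite S"
    and outside: "\<And>w. w \<in> digit_words d n \<Longrightarrow> digits_value d w \<notin> S \<Longrightarrow>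
      rescale d n (digits_value d w) A \<inter> {0..3/2} = {}"
  shows "measure \<mu> A \<le> q ^ n * (\<Sum>s\<in>S. real (word_count d n s))"
proof -
  have "measure \<mu> A \<le> (\<Sum>w\<in>digit_words d n. q ^ n * of_bool (digits_value d w \<in> S))"
    unfolding measure_iterate_uniform[OF A, of n]
  proof (intro sum_mono mult_left_mono)
    fix w assume "w \<in> digit_words d n"
    then show "measure \<mu> (rescale d n (digits_value d w) A) \<le> of_bool (digits_value d w \<in> S)"
      using measure_eq_0_outside[OF rescale_borel[OF _ A] outside] d_ge_3
        prob_space.prob_le_1[OF prob_space] by auto
  qed (use q_pos in simp)
  then show ?thesis
    by (simp add: sum_distrib_left[symmetric] sum_digit_words_value_in[OF S])
qed

lemma measure_ge_word_count:
  assumes A: "A \<in> sets borel" and S: "finite S"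
    and inside: "\<And>s. s \<in> S \<Longrightarrow> {0..3/2} \<subseteq> rescale d n s A"
  shows "q ^ n * (\<Sum>s\<in>S. real (word_count d n s)) \<le> measure \<mu> A"
proof -
  have "(\<Sum>w\<in>digit_words d n. q ^ n * of_bool (digits_value d w \<in> S)) \<le> measure \<mu> A"
    unfolding measure_iterate_uniform[OF A, of n]
  proof (intro sum_mono mult_left_mono)
    fix w assume "w \<in> digit_words d n"
    then show "of_bool (digits_value d w \<in> S) \<le> measure \<mu> (rescale d n (digits_value d w) A)"
      using measure_eq_1_inside[OF rescale_borel[OF _ A] inside] d_ge_3 by auto
  qed (use q_pos in simp)
  then show ?thesis
    by (simp add: sum_distrib_left[symmetric] sum_digit_words_value_in[OF S])
qed

(* After rescaling by d^n, only the 7 integer shifts nearest to d^n x can bring the ball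
   into [0, 3/2]. *)
lemma measure_ball_le:
  assumes r: "0 < r" and n: "real d ^ n * r \<le> 1"
  shows "measure \<mu> (ball x r) \<le> 7 * (golden_ratio * q) ^ n"
proof -
  define z where "z = \<lfloor>real d ^ n * x\<rfloor>"
  have "measure \<mu> (ball x r) \<le> q ^ n * (\<Sum>s\<in>{z - 3..z + 3}. real (word_count d n s))"
  proof (rule measure_le_word_count)
    fix w assume "digits_value d w \<notin> {z - 3..z + 3}"
    then have far: "real_of_int (digits_value d w) \<le> real_of_int z - 4
        \<or> real_of_int z + 4 \<le> real_of_int (digits_value d w)"
      by auto
    show "rescale d n (digits_value d w) (ball x r) \<inter> {0..3/2} = {}"
    proof (rule ccontr)
      assume "rescale d n (digits_value d w) (ball x r) \<inter> {0..3/2} \<noteq> {}"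
      then obtain y where y: "dist x y < r"
        "0 \<le> real d ^ n * y - digits_value d w" "real d ^ n * y - digits_value d w \<le> 3/2"
        unfolding rescale_def by auto
      have "\<bar>real d ^ n * y - real d ^ n * x\<bar> = real d ^ n * dist x y"
        by (simp add: dist_real_def abs_mult abs_minus_commute flip: right_diff_distrib)
      also have "\<dots> \<le> real d ^ n * r"
        using y(1) by (intro mult_left_mono) auto
      also have "\<dots> \<le> 1"
        by (rule n)
      finally show False
        using far y(2,3) z_def by linarith
    qed
  qed simp_all
  also have "\<dots> \<le> q ^ n * (\<Sum>s\<in>{z - 3..z + 3}. golden_ratio ^ n)"
    using word_count_le_fib[of d n] fib_Suc_le_golden_ratio_power[of n] d_ge_3 q_pos
    by (intro mult_left_mono sum_mono) (auto intro: order.trans[OF of_nat_mono])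
  also have "\<dots> = 7 * (golden_ratio * q) ^ n"
    by (simp add: power_mult_distrib)
  finally show ?thesis .
qed

lemma measure_ball_alternating_point_ge:
  assumes n: "3 < real d ^ n * r"
  shows "(golden_ratio * q) ^ n \<le> measure \<mu> (ball (alternating_point d) r)"
proof -
  let ?x = "alternating_point d" and ?a = "alternating_value d n"
  have "q ^ n * (\<Sum>s\<in>{?a - 1, ?a}. real (word_count d n s)) \<le> measure \<mu> (ball ?x r)"
  proof (rule measure_ge_word_count)
    fix s assume "s \<in> {?a - 1, ?a}"
    then have s: "0 \<le> real d ^ n * ?x - s" "real d ^ n * ?x - s \<le> 3/2"
      using alternating_point_shift_bounds[of n] by auto
    show "{0..3/2} \<subseteq> rescale d n s (ball ?x r)"
    proof
      fix u :: real assume u: "u \<in> {0..3/2}"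
      define y where "y = (u + s) / real d ^ n"
      have "real d ^ n * \<bar>?x - y\<bar> = \<bar>real d ^ n * ?x - s - u\<bar>"
        using d_ge_3 by (simp add: y_def abs_mult field_simps flip: right_diff_distrib)
      also have "\<dots> < real d ^ n * r"
        using s u n by auto
      finally have "y \<in> ball ?x r"
        using mult_less_cancel_left_pos[of "real d ^ n"] d_ge_3 by (simp add: dist_real_def)
      moreover have "u = real d ^ n * y - s"
        using d_ge_3 by (simp add: y_def)
      ultimately show "u \<in> rescale d n s (ball ?x r)"
        unfolding rescale_def by blast
    qed
  qed simp_all
  moreover have "(\<Sum>s\<in>{?a - 1, ?a}. real (word_count d n s)) = fib (Suc (Suc n))"
    using word_count_alternating_value[of d n] d_ge_3 by simp
  moreover have "q ^ n * golden_ratio ^ n \<le> q ^ n * real (fib (Suc (Suc n)))"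
    using golden_ratio_power_le_fib q_pos by (intro mult_left_mono) auto
  ultimately show ?thesis
    by (simp only: power_mult_distrib mult.commute)
qed

lemma min_local_dim_mult_ln: "min_local_dim * ln r = log d r * - ln (golden_ratio * q)"
  by (simp add: min_local_dim_def log_def)

lemma ln_measure_ball_le:
  assumes r: "0 < r" "r < 1" and pos: "0 < measure \<mu> (ball x r)"
  shows "ln (measure \<mu> (ball x r)) \<le> min_local_dim * ln r + (ln 7 - ln (golden_ratio * q))"
proof -
  obtain n where n: "real d ^ n * r \<le> 1" "- log d r < real n + 1"
    using log_scale_index[of "real d" r] d_ge_3 r by auto
  have "ln (measure \<mu> (ball x r)) \<le> ln (7 * (golden_ratio * q) ^ n)"
    using measure_ball_le[OF r(1) n(1), of x] pos golden_ratio_q_pos by simp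
  also have "\<dots> = ln 7 + ln ((golden_ratio * q) ^ n)"
    using golden_ratio_q_pos by (intro ln_mult_pos) simp_all
  also have "\<dots> = ln 7 + real n * ln (golden_ratio * q)"
    by (simp only: ln_realpow)
  also have "\<dots> \<le> ln 7 + (- log d r - 1) * ln (golden_ratio * q)"
    using n(2) golden_ratio_q_pos golden_ratio_q_less_1
    by (intro add_left_mono mult_right_mono_neg) auto
  finally show ?thesis
    by (simp add: min_local_dim_mult_ln algebra_simps)
qed

lemma ln_measure_ball_alternating_point_ge:
  assumes r: "0 < r" "r < 1"
  shows "min_local_dim * ln r + 2 * ln (golden_ratio * q) \<le> ln (measure \<mu> (ball (alternating_point d) r))"
proof -
  obtain n where n: "1 < real d ^ Suc n * r" "real n \<le> - log d r"
    using log_scale_index[of "real d" r] d_ge_3 r by auto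
  have "real d * 1 < real d * (real d ^ Suc n * r)"
    using n(1) d_ge_3 by (intro mult_strict_left_mono) auto
  moreover have "real d ^ Suc (Suc n) * r = real d * (real d ^ Suc n * r)" "3 \<le> real d"
    using d_ge_3 by simp_all
  ultimately have "3 < real d ^ Suc (Suc n) * r"
    by linarith
  have "- log d r * ln (golden_ratio * q) \<le> real n * ln (golden_ratio * q)"
    using n(2) golden_ratio_q_pos golden_ratio_q_less_1 by (intro mult_right_mono_neg) auto
  then have "min_local_dim * ln r + 2 * ln (golden_ratio * q) \<le> (real n + 2) * ln (golden_ratio * q)"
    by (simp add: min_local_dim_mult_ln algebra_simps)
  also have "\<dots> = ln ((golden_ratio * q) ^ Suc (Suc n))"
    by (simp only: ln_realpow) simp
  also have "\<dots> \<le> ln (measure \<mu> (ball (alternating_point d) r))"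
    using measure_ball_alternating_point_ge[OF \<open>3 < _\<close>] golden_ratio_q_pos
    by (intro ln_mono) simp_all
  finally show ?thesis .
qed

lemma alternating_point_in_support: "alternating_point d \<in> msupp \<mu>"
  unfolding msupp_def
proof (intro CollectI allI impI)
  fix r :: real assume "0 < r"
  then obtain n where "3 / r < real d ^ n"
    using real_arch_pow[of "real d" "3 / r"] d_ge_3 by auto
  then have "3 < real d ^ n * r"
    using \<open>0 < r\<close> by (simp add: field_simps)
  from measure_ball_alternating_point_ge[OF this]
  show "0 < measure \<mu> (ball (alternating_point d) r)"
    using golden_ratio_q_pos by (meson less_le_trans zero_less_power)
qed

lemma local_dim_alternating_point:
  "((\<lambda>r. ln (measure \<mu> (ball (alternating_point d) r)) / ln r) \<longlongrightarrow> min_local_dim) (at_right 0)"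
proof (rule tendsto_divide_ln_at_right_0)
  show "\<forall>\<^sub>F r in at_right 0. \<bar>ln (measure \<mu> (ball (alternating_point d) r)) - min_local_dim * ln r\<bar>
      \<le> ln 7 - 2 * ln (golden_ratio * q)"
    using eventually_at_right_0_less_1
  proof eventually_elim
    case (elim r)
    then have "0 < measure \<mu> (ball (alternating_point d) r)"
      using alternating_point_in_support unfolding msupp_def by auto
    moreover have "ln (golden_ratio * q) < 0" "0 \<le> ln (7 :: real)"
      using golden_ratio_q_pos golden_ratio_q_less_1 by simp_all
    ultimately show ?case
      using ln_measure_ball_le[of r "alternating_point d"] ln_measure_ball_alternating_point_ge[of r] elim
      unfolding abs_le_iff by linarith
  qed
qed

lemma min_local_dim_le:
  assumes x: "x \<in> msupp \<mu>"
    and lim: "((\<lambda>r. ln (measure \<mu> (ball x r)) / ln r) \<longlongrightarrow> L) (at_right 0)"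
  shows "min_local_dim \<le> L"
proof (rule tendsto_divide_ln_at_right_0_ge[OF _ lim])
  show "\<forall>\<^sub>F r in at_right 0. ln (measure \<mu> (ball x r))
      \<le> min_local_dim * ln r + (ln 7 - ln (golden_ratio * q))"
    using eventually_at_right_0_less_1
  proof eventually_elim
    case (elim r)
    then show ?case
      using x ln_measure_ball_le[of r x] unfolding msupp_def by blast
  qed
qed

lemma Inf_local_dims: "Inf (local_dims \<mu>) = min_local_dim"
proof (rule cInf_eq_minimum)
  show "min_local_dim \<in> local_dims \<mu>"
    unfolding local_dims_def using alternating_point_in_support local_dim_alternating_point by blast
qed (auto simp: local_dims_def intro: min_local_dim_le)

end

theorem proposition19:
  fixes d :: nat and \<mu> :: "real measure" and p :: "nat \<Rightarrow> real"
  assumes "d \<ge> 3"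
    and "\<And>i. p i = 1 / (real d + 1)"
    and "is_ssm d d p \<mu>"
  shows "Inf (local_dims \<mu>) = alpha_low d d p
    \<and> alpha_low d d p = (ln (real d + 1) - ln ((1 + sqrt 5) / 2)) / ln (real d)
    \<and> alpha_star d d p = alpha_up d p
    \<and> alpha_up d p = ln (real d + 1) / ln (real d)"
proof -
  interpret uniform_self_similar d p \<mu>
    using assms by unfold_locales auto
  show ?thesis
    using Inf_local_dims alpha_low_uniform min_local_dim_eq alpha_star_uniform alpha_up_uniform
    unfolding golden_ratio_def by simp
qed

end
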